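(* Let $G_1$ and $G_2$ be two good trees of total degree $e$ (i.e. each has exactly $e$ vertices, each of degree $1$), each having $k$ marked points. Then $G_1$ and $G_2$ can be connected by a finite series of conic deformations: there are good trees $G_1=T_0,T_1,\dots,T_m=G_2$ such that $T_j$ and $T_{j+1}$ are connected by a conic deformation for each $j$.
   Context: A (dual) graph is a finite tree together with a non-negative integer $d_v$ (the degree) for each vertex $v$ and a list $\mathcal{L}$ of (not necessarily distinct) vertices called marked points; the number of times a vertex occurs in $\mathcal{L}$ is its multiplicity. The degree of a graph is $\sum_v d_v$. A good tree is such a graph with $d_v=1$ for all $v$. A subgraph $W$ of $G$ has $v(W)\subseteq v(G)$, $e(W)\subseteq e(G)$, marked points $\mathcal{L}(W)\subseteq\mathcal{L}(G)$ counted with multiplicity, and the same degrees. For a nonempty subgraph $H$ of $G$, the contraction $G_1$ of $G$ along $H$ has vertex set $(v(G)-v(H))\amalg\{v_H\}$; its edges are the edges of $G$ between vertices not in $H$ together with an edge from $v_H$ to each vertex outside $H$ joined in $G$ to a vertex of $H$; its marked points are the marked points of $G$ outside $H$ together with $v_H$ with multiplicity $|\mathcal{L}(H)|$; and $d_{v_H}=\sum_{v\in v(H)}d_v$, other degrees unchanged. If $G$ is a good tree and $G_1$ is obtained by contracting a subgraph of total degree two, $G_1$ is a conic deformation of $G$. Two good trees are connected by a conic deformation if there is a graph $K$ which is a conic deformation of both. *)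

theory Defs
  imports Main "HOL-Library.Multiset"
begin

text \<open>A (dual) graph: vertex set, undirected edges (2-element sets), degrees, and a
  multiset of marked points (vertices). Degrees outside the vertex set are irrelevant.\<close>
record 'a dgraph =
  verts :: "'a set"
  edges :: "'a set set"
  deg   :: "'a \<Rightarrow> nat"
  marks :: "'a multiset"

definition adj :: "'a dgraph \<Rightarrow> ('a \<times> 'a) set" where
  "adj G = {(u, v). {u, v} \<in> edges G}"

definition is_graph :: "'a dgraph \<Rightarrow> bool" where
  "is_graph G \<longleftrightarrow>
     finite (verts G) \<and> verts G \<noteq> {} \<and>
     (\<forall>e\<in>edges G. \<exists>u v. u \<noteq> v \<and> e = {u, v} \<and> u \<in> verts G \<and> v \<in> verts G) \<and>
     (\<forall>u\<in>verts G. \<forall>v\<in>verts G. (u, v) \<in> (adj G)\<^sup>*) \<and>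
     card (edges G) = card (verts G) - 1 \<and>
     set_mset (marks G) \<subseteq> verts G"

definition total_degree :: "'a dgraph \<Rightarrow> nat" where
  "total_degree G = (\<Sum>v\<in>verts G. deg G v)"

definition good_tree :: "'a dgraph \<Rightarrow> bool" where
  "good_tree G \<longleftrightarrow> is_graph G \<and> (\<forall>v\<in>verts G. deg G v = 1)"

definition subgraph :: "'a dgraph \<Rightarrow> 'a dgraph \<Rightarrow> bool" where
  "subgraph W G \<longleftrightarrow> is_graph W \<and> verts W \<subseteq> verts G \<and> edges W \<subseteq> edges G \<and>
     marks W \<subseteq># marks G \<and> (\<forall>v\<in>verts W. deg W v = deg G v)"

text \<open>Contraction of G along H, the new vertex v_H being named w
  (w must not be one of the surviving vertices).\<close>
definition contract :: "'a dgraph \<Rightarrow> 'a dgraph \<Rightarrow> 'a \<Rightarrow> 'a dgraph" where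
  "contract G H w =
    \<lparr> verts = (verts G - verts H) \<union> {w},
      edges = {e \<in> edges G. e \<inter> verts H = {}} \<union>
              {{w, u} | u. u \<in> verts G - verts H \<and> (\<exists>x\<in>verts H. {x, u} \<in> edges G)},
      deg = (\<lambda>v. if v = w then (\<Sum>x\<in>verts H. deg G x) else deg G v),
      marks = filter_mset (\<lambda>v. v \<notin> verts H) (marks G) + replicate_mset (size (marks H)) w \<rparr>"

definition dgraph_iso :: "'a dgraph \<Rightarrow> 'b dgraph \<Rightarrow> bool" where
  "dgraph_iso G K \<longleftrightarrow> (\<exists>f. bij_betw f (verts G) (verts K) \<and>
     (\<forall>u\<in>verts G. \<forall>v\<in>verts G. {u, v} \<in> edges G \<longleftrightarrow> {f u, f v} \<in> edges K) \<and>
     (\<forall>v\<in>verts G. deg K (f v) = deg G v) \<and>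
     marks K = image_mset f (marks G))"

definition conic_deformation :: "'a dgraph \<Rightarrow> 'a dgraph \<Rightarrow> bool" where
  "conic_deformation K G \<longleftrightarrow> good_tree G \<and>
     (\<exists>H w. subgraph H G \<and> total_degree H = 2 \<and>
        marks H = filter_mset (\<lambda>v. v \<in> verts H) (marks G) \<and>
        w \<notin> verts G - verts H \<and> dgraph_iso (contract G H w) K)"

definition connected_by_conic :: "'a dgraph \<Rightarrow> 'a dgraph \<Rightarrow> bool" where
  "connected_by_conic G1 G2 \<longleftrightarrow> (\<exists>K. conic_deformation K G1 \<and> conic_deformation K G2)"

end

theory Submission imports Defs begin

text \<open>Fix a vertex c. Contracting an edge {c, v} of a good tree to c forgets how the other
  neighbours of c and v are distributed among the two and where the marks on {c, v} sit.
  Hence sliding an edge {v, y} to {c, y}, or moving a mark from a neighbour of c to c, gives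
  a good tree connected to the original one by a conic deformation. Repeating these moves turns
  every good tree into the star centred at c carrying all marks at c, which depends only on the
  vertex set and the number of marks. Up to renaming the vertices of one of them, two good trees
  of the same degree with the same number of marks therefore reach the same star.\<close>

lemma adj_iff [simp]: "(u, v) \<in> adj G \<longleftrightarrow> {u, v} \<in> edges G"
  by (simp add: adj_def)

lemma adj_sym: "(u, v) \<in> adj G \<Longrightarrow> (v, u) \<in> adj G"
  by (simp add: insert_commute)

lemma is_graph_finite_verts: "is_graph G \<Longrightarrow> finite (verts G)"
  by (simp add: is_graph_def)

lemma is_graph_verts_nonempty: "is_graph G \<Longrightarrow> verts G \<noteq> {}"
  by (simp add: is_graph_def)

lemma is_graph_connected: "is_graph G \<Longrightarrow> u \<in> verts G \<Longrightarrow> v \<in> verts G \<Longrightarrow> (u, v) \<in> (adj G)\<^sup>*"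
  by (simp add: is_graph_def)

lemma is_graph_card_edges: "is_graph G \<Longrightarrow> card (edges G) = card (verts G) - 1"
  by (simp add: is_graph_def)

lemma is_graph_marks_subset: "is_graph G \<Longrightarrow> set_mset (marks G) \<subseteq> verts G"
  by (simp add: is_graph_def)

lemma is_graph_edgeE:
  assumes "is_graph G" "e \<in> edges G"
  obtains u v where "u \<noteq> v" "e = {u, v}" "u \<in> verts G" "v \<in> verts G"
proof -
  have "\<forall>e\<in>edges G. \<exists>u v. u \<noteq> v \<and> e = {u, v} \<and> u \<in> verts G \<and> v \<in> verts G"
    using assms(1) by (simp add: is_graph_def)
  with assms(2) that show thesis by blast
qed

lemma is_graph_edgeD:
  assumes "is_graph G" "{u, v} \<in> edges G"
  shows "u \<in> verts G" "v \<in> verts G" "u \<noteq> v"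
  by (rule is_graph_edgeE[OF assms]; force simp: doubleton_eq_iff)+

lemma is_graph_edges_Pow: "is_graph G \<Longrightarrow> edges G \<subseteq> Pow (verts G)"
  by (auto elim: is_graph_edgeE)

lemma is_graph_finite_edges: "is_graph G \<Longrightarrow> finite (edges G)"
  by (rule finite_subset[OF is_graph_edges_Pow]) (simp_all add: is_graph_finite_verts)

lemma good_tree_is_graph: "good_tree G \<Longrightarrow> is_graph G"
  by (simp add: good_tree_def)

lemma good_tree_deg: "good_tree G \<Longrightarrow> v \<in> verts G \<Longrightarrow> deg G v = 1"
  by (simp add: good_tree_def)

lemma rtrancl_crosses_boundary:
  "(a, b) \<in> r\<^sup>* \<Longrightarrow> a \<in> A \<Longrightarrow> b \<notin> A \<Longrightarrow> \<exists>x y. (x, y) \<in> r \<and> x \<in> A \<and> y \<notin> A"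
  by (induction rule: rtrancl_induct) auto

lemma good_tree_edges_update:
  assumes "good_tree G"
    and "\<forall>e\<in>E. \<exists>u v. u \<noteq> v \<and> e = {u, v} \<and> u \<in> verts G \<and> v \<in> verts G"
    and "card E = card (edges G)"
    and "\<And>a b. {a, b} \<in> edges G \<Longrightarrow> (a, b) \<in> (adj (G\<lparr>edges := E\<rparr>))\<^sup>*"
  shows "good_tree (G\<lparr>edges := E\<rparr>)"
proof -
  have ig: "is_graph G" and deg: "\<forall>v\<in>verts G. deg G v = 1"
    using assms(1) by (simp_all add: good_tree_def)
  have "(adj G)\<^sup>* \<subseteq> (adj (G\<lparr>edges := E\<rparr>))\<^sup>*"
    by (rule rtrancl_subset_rtrancl) (auto intro: assms(4))
  then have "\<forall>u\<in>verts G. \<forall>w\<in>verts G. (u, w) \<in> (adj (G\<lparr>edges := E\<rparr>))\<^sup>*"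
    using is_graph_connected[OF ig] by blast
  with assms(2,3) deg is_graph_finite_verts[OF ig] is_graph_verts_nonempty[OF ig]
    is_graph_card_edges[OF ig] is_graph_marks_subset[OF ig]
  show ?thesis by (simp add: good_tree_def is_graph_def)
qed

lemma good_tree_marks_update:
  assumes "good_tree G" "set_mset M \<subseteq> verts G"
  shows "good_tree (G\<lparr>marks := M\<rparr>)"
proof -
  have "adj (G\<lparr>marks := M\<rparr>) = adj G" by (simp add: adj_def)
  with assms show ?thesis by (simp add: good_tree_def is_graph_def)
qed

definition edge_subgraph :: "'a dgraph \<Rightarrow> 'a \<Rightarrow> 'a \<Rightarrow> 'a dgraph" where
  "edge_subgraph G c v = \<lparr>verts = {c, v}, edges = {{c, v}}, deg = deg G,
      marks = filter_mset (\<lambda>z. z \<in> {c, v}) (marks G)\<rparr>"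

lemma conic_deformation_contract_edge:
  assumes "good_tree G" "{c, v} \<in> edges G"
  shows "conic_deformation (contract G (edge_subgraph G c v) c) G"
proof -
  let ?H = "edge_subgraph G c v"
  have cv: "c \<in> verts G" "v \<in> verts G" "c \<noteq> v"
    using is_graph_edgeD[OF good_tree_is_graph[OF assms(1)] assms(2)] .
  have "(c, v) \<in> adj ?H" "(v, c) \<in> adj ?H"
    by (simp_all add: edge_subgraph_def insert_commute)
  then have "\<forall>u\<in>verts ?H. \<forall>w\<in>verts ?H. (u, w) \<in> (adj ?H)\<^sup>*"
    by (auto simp: edge_subgraph_def)
  then have "is_graph ?H"
    unfolding is_graph_def using cv by (auto simp: edge_subgraph_def)
  then have "subgraph ?H G"
    unfolding subgraph_def edge_subgraph_def using cv assms(2)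
    by (auto simp: multiset_filter_subset)
  moreover have "total_degree ?H = 2"
    using assms(1) cv by (simp add: total_degree_def edge_subgraph_def good_tree_def)
  ultimately show ?thesis
    unfolding conic_deformation_def using assms(1)
    by (intro conjI exI[of _ ?H] exI[of _ c]) (auto simp: edge_subgraph_def dgraph_iso_def)
qed

lemma contract_edge_subgraph_eqI:
  assumes "verts G' = verts G" "deg G' = deg G"
    and "{e \<in> edges G'. e \<inter> {c, v} = {}} = {e \<in> edges G. e \<inter> {c, v} = {}}"
    and "\<And>u. u \<notin> {c, v} \<Longrightarrow>
           (\<exists>x\<in>{c, v}. {x, u} \<in> edges G') \<longleftrightarrow> (\<exists>x\<in>{c, v}. {x, u} \<in> edges G)"
    and "filter_mset (\<lambda>z. z \<notin> {c, v}) (marks G') = filter_mset (\<lambda>z. z \<notin> {c, v}) (marks G)"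
    and "size (filter_mset (\<lambda>z. z \<in> {c, v}) (marks G')) =
         size (filter_mset (\<lambda>z. z \<in> {c, v}) (marks G))"
  shows "contract G' (edge_subgraph G' c v) c = contract G (edge_subgraph G c v) c"
proof -
  have "{{c, u} |u. u \<in> verts G - {c, v} \<and> (\<exists>x\<in>{c, v}. {x, u} \<in> edges G')} =
        {{c, u} |u. u \<in> verts G - {c, v} \<and> (\<exists>x\<in>{c, v}. {x, u} \<in> edges G)}"
    using assms(4) by blast
  with assms show ?thesis
    unfolding contract_def edge_subgraph_def by (simp only: dgraph.simps)
qed

lemma connected_by_conic_if_contract_edge_eq:
  assumes "good_tree G" "good_tree G'" "{c, v} \<in> edges G" "{c, v} \<in> edges G'"
    and "contract G' (edge_subgraph G' c v) c = contract G (edge_subgraph G c v) c"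
  shows "connected_by_conic G G'"
  unfolding connected_by_conic_def
  using conic_deformation_contract_edge[OF assms(1,3)] conic_deformation_contract_edge[OF assms(2,4)]
    assms(5) by auto

definition slide_edge :: "'a dgraph \<Rightarrow> 'a \<Rightarrow> 'a \<Rightarrow> 'a \<Rightarrow> 'a dgraph" where
  "slide_edge G c v y = G\<lparr>edges := insert {c, y} (edges G - {{v, y}})\<rparr>"

lemma slide_edge_simps [simp]:
  "verts (slide_edge G c v y) = verts G" "deg (slide_edge G c v y) = deg G"
  "marks (slide_edge G c v y) = marks G"
  by (simp_all add: slide_edge_def)

lemma good_tree_slide_edge:
  assumes g: "good_tree G" and cv: "{c, v} \<in> edges G" and vy: "{v, y} \<in> edges G"
    and "y \<noteq> c" and "{c, y} \<notin> edges G"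
  shows "good_tree (slide_edge G c v y)"
proof -
  let ?E = "insert {c, y} (edges G - {{v, y}})"
  let ?G' = "G\<lparr>edges := ?E\<rparr>"
  have ig: "is_graph G" using g by (rule good_tree_is_graph)
  have vert: "c \<in> verts G" "v \<in> verts G" "y \<in> verts G" "c \<noteq> v"
    using is_graph_edgeD[OF ig cv] is_graph_edgeD[OF ig vy] by auto
  have "\<exists>u w. u \<noteq> w \<and> e = {u, w} \<and> u \<in> verts G \<and> w \<in> verts G" if "e \<in> ?E" for e
  proof (cases "e = {c, y}")
    case True
    with vert assms(4) show ?thesis by blast
  next
    case False
    with that have "e \<in> edges G" by simp
    then show ?thesis by (rule is_graph_edgeE[OF ig]) blast
  qed
  then have "\<forall>e\<in>?E. \<exists>u w. u \<noteq> w \<and> e = {u, w} \<and> u \<in> verts G \<and> w \<in> verts G" by blast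
  moreover have "card ?E = card (edges G)"
    using is_graph_finite_edges[OF ig] vy assms(5)
    by (simp add: card_insert_disjoint card_Suc_Diff1 del: card_Diff_insert)
  moreover have "(a, b) \<in> (adj ?G')\<^sup>*" if "{a, b} \<in> edges G" for a b
  proof (cases "{a, b} = {v, y}")
    case True
    have "(v, c) \<in> adj ?G'" "(c, y) \<in> adj ?G'"
      using cv vert assms(4) by (auto simp: doubleton_eq_iff insert_commute)
    then have "(v, y) \<in> (adj ?G')\<^sup>*" "(y, v) \<in> (adj ?G')\<^sup>*"
      by (meson adj_sym converse_rtrancl_into_rtrancl r_into_rtrancl)+
    with True show ?thesis by (auto simp: doubleton_eq_iff)
  next
    case False
    with that show ?thesis by (intro r_into_rtrancl) simp
  qed
  ultimately show ?thesis
    unfolding slide_edge_def using good_tree_edges_update[OF g] by blast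
qed

lemma connected_by_conic_slide_edge:
  assumes g: "good_tree G" and cv: "{c, v} \<in> edges G" and vy: "{v, y} \<in> edges G"
    and "y \<noteq> c" and "{c, y} \<notin> edges G"
  shows "connected_by_conic G (slide_edge G c v y)"
proof (rule connected_by_conic_if_contract_edge_eq[OF g good_tree_slide_edge[OF assms] cv])
  have "c \<noteq> v" "v \<noteq> y"
    using is_graph_edgeD[OF good_tree_is_graph[OF g] cv] is_graph_edgeD[OF good_tree_is_graph[OF g] vy]
    by auto
  with assms show "{c, v} \<in> edges (slide_edge G c v y)"
    by (auto simp: slide_edge_def doubleton_eq_iff)
  show "contract (slide_edge G c v y) (edge_subgraph (slide_edge G c v y) c v) c =
        contract G (edge_subgraph G c v) c"
  proof (rule contract_edge_subgraph_eqI)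
    show "{e \<in> edges (slide_edge G c v y). e \<inter> {c, v} = {}} = {e \<in> edges G. e \<inter> {c, v} = {}}"
      by (auto simp: slide_edge_def)
    show "(\<exists>x\<in>{c, v}. {x, u} \<in> edges (slide_edge G c v y)) \<longleftrightarrow> (\<exists>x\<in>{c, v}. {x, u} \<in> edges G)"
      if "u \<notin> {c, v}" for u
    proof (cases "u = y")
      case True
      with vy show ?thesis by (simp add: slide_edge_def)
    next
      case False
      with that assms(4) \<open>c \<noteq> v\<close> \<open>v \<noteq> y\<close> show ?thesis
        by (simp add: slide_edge_def doubleton_eq_iff)
    qed
  qed simp_all
qed

definition move_mark :: "'a dgraph \<Rightarrow> 'a \<Rightarrow> 'a \<Rightarrow> 'a dgraph" where
  "move_mark G x c = G\<lparr>marks := add_mset c (marks G - {#x#})\<rparr>"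

lemma move_mark_simps [simp]:
  "verts (move_mark G x c) = verts G" "deg (move_mark G x c) = deg G"
  "edges (move_mark G x c) = edges G"
  by (simp_all add: move_mark_def)

lemma good_tree_move_mark: "good_tree G \<Longrightarrow> c \<in> verts G \<Longrightarrow> good_tree (move_mark G x c)"
  unfolding move_mark_def using is_graph_marks_subset[OF good_tree_is_graph]
  by (intro good_tree_marks_update) (auto dest: in_diffD)

lemma size_move_mark: "x \<in># marks G \<Longrightarrow> size (marks (move_mark G x c)) = size (marks G)"
  by (simp add: move_mark_def size_Suc_Diff1)

lemma connected_by_conic_move_mark:
  assumes g: "good_tree G" and cx: "{c, x} \<in> edges G" and x: "x \<in># marks G"
  shows "connected_by_conic G (move_mark G x c)"
proof (rule connected_by_conic_if_contract_edge_eq[OF g good_tree_move_mark[OF g] cx])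
  show "c \<in> verts G" using is_graph_edgeD[OF good_tree_is_graph[OF g] cx] by simp
  show "{c, x} \<in> edges (move_mark G x c)" using cx by simp
  let ?F = "filter_mset (\<lambda>z. z \<in> {c, x}) (marks G)"
  have "x \<in># ?F" using x by simp
  then have "size (filter_mset (\<lambda>z. z \<in> {c, x}) (marks (move_mark G x c))) = size ?F"
    by (simp add: move_mark_def size_Suc_Diff1)
  then show "contract (move_mark G x c) (edge_subgraph (move_mark G x c) c x) c =
             contract G (edge_subgraph G c x) c"
    by (intro contract_edge_subgraph_eqI) (simp_all add: move_mark_def)
qed

definition star :: "'a set \<Rightarrow> 'a \<Rightarrow> nat \<Rightarrow> ('a \<Rightarrow> nat) \<Rightarrow> 'a dgraph" where
  "star V c k d =
     \<lparr>verts = V, edges = {{c, x} |x. x \<in> V \<and> x \<noteq> c}, deg = d, marks = replicate_mset k c\<rparr>"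

definition non_neighbours :: "'a dgraph \<Rightarrow> 'a \<Rightarrow> 'a set" where
  "non_neighbours G c = {x \<in> verts G. x \<noteq> c \<and> {c, x} \<notin> edges G}"

definition star_defect :: "'a dgraph \<Rightarrow> 'a \<Rightarrow> nat" where
  "star_defect G c = card (non_neighbours G c) + size (filter_mset (\<lambda>z. z \<noteq> c) (marks G))"

lemma star_eq_if_star_defect_eq_0:
  assumes g: "good_tree G" and c: "c \<in> verts G" and "star_defect G c = 0"
  shows "star (verts G) c (size (marks G)) (deg G) = G"
proof -
  have ig: "is_graph G" using g by (rule good_tree_is_graph)
  have fin: "finite (verts G)" using ig by (rule is_graph_finite_verts)
  have "non_neighbours G c = {}" and marks_c: "\<forall>z\<in>#marks G. z = c"
    using assms(3) fin by (auto simp: star_defect_def non_neighbours_def)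
  let ?S = "{{c, x} |x. x \<in> verts G \<and> x \<noteq> c}"
  have "?S = (\<lambda>x. {c, x}) ` (verts G - {c})" by auto
  moreover have "inj_on (\<lambda>x. {c, x}) (verts G - {c})"
    by (auto simp: inj_on_def doubleton_eq_iff)
  ultimately have "card ?S = card (verts G - {c})"
    by (simp add: card_image)
  also have "\<dots> = card (edges G)"
    using c fin is_graph_card_edges[OF ig] by simp
  finally have "card ?S = card (edges G)" .
  moreover have "?S \<subseteq> edges G"
    using \<open>non_neighbours G c = {}\<close> by (auto simp: non_neighbours_def)
  ultimately have "?S = edges G"
    by (simp add: card_subset_eq is_graph_finite_edges[OF ig])
  moreover have "marks G = replicate_mset (size (marks G)) c"
    using marks_c by (intro set_mset_subset_singletonD) auto
  ultimately show ?thesis by (simp add: star_def)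
qed

lemma star_defect_slide_edge_less:
  assumes g: "good_tree G" and cv: "{c, v} \<in> edges G" and vy: "{v, y} \<in> edges G"
    and "y \<noteq> c" and "{c, y} \<notin> edges G"
  shows "star_defect (slide_edge G c v y) c < star_defect G c"
proof -
  have ig: "is_graph G" using g by (rule good_tree_is_graph)
  have "c \<noteq> v" "y \<in> verts G" using is_graph_edgeD[OF ig cv] is_graph_edgeD[OF ig vy] by auto
  then have "non_neighbours (slide_edge G c v y) c = non_neighbours G c - {y}"
    using assms(4) by (auto simp: non_neighbours_def slide_edge_def doubleton_eq_iff)
  moreover have "y \<in> non_neighbours G c" "finite (non_neighbours G c)"
    using \<open>y \<in> verts G\<close> assms(4,5) is_graph_finite_verts[OF ig]
    by (auto simp: non_neighbours_def)
  ultimately have "card (non_neighbours (slide_edge G c v y) c) < card (non_neighbours G c)"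
    by (simp only:) (rule card_Diff1_less)
  then show ?thesis
    by (simp add: star_defect_def)
qed

lemma star_defect_move_mark_less:
  assumes "x \<in># marks G" "x \<noteq> c"
  shows "star_defect (move_mark G x c) c < star_defect G c"
proof -
  let ?F = "filter_mset (\<lambda>z. z \<noteq> c) (marks G)"
  have "x \<in># ?F" using assms by simp
  then have "size (filter_mset (\<lambda>z. z \<noteq> c) (marks (move_mark G x c))) < size ?F"
    using assms by (simp add: move_mark_def size_Diff1_less)
  then show ?thesis
    by (simp add: star_defect_def non_neighbours_def)
qed

lemma star_defect_decreasing_step:
  assumes g: "good_tree G" and c: "c \<in> verts G" and "star_defect G c \<noteq> 0"
  obtains G' where "connected_by_conic G G'" "good_tree G'" "verts G' = verts G"
    "deg G' = deg G" "size (marks G') = size (marks G)" "star_defect G' c < star_defect G c"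
proof (cases "non_neighbours G c = {}")
  case False
  then obtain x where x: "x \<in> verts G" "x \<noteq> c" "{c, x} \<notin> edges G"
    by (auto simp: non_neighbours_def)
  have "(c, x) \<in> (adj G)\<^sup>*" using is_graph_connected[OF good_tree_is_graph[OF g] c x(1)] .
  \<comment> \<open>a path from c to x leaves the closed neighbourhood of c through some edge {v, y}\<close>
  from rtrancl_crosses_boundary[OF this, of "{z. z = c \<or> {c, z} \<in> edges G}"] x
  obtain v y where vy: "{v, y} \<in> edges G" "v = c \<or> {c, v} \<in> edges G" "y \<noteq> c" "{c, y} \<notin> edges G"
    by auto
  then have slide: "good_tree G" "{c, v} \<in> edges G" "{v, y} \<in> edges G" "y \<noteq> c" "{c, y} \<notin> edges G"
    using g by auto
  show ?thesis
    by (rule that[of "slide_edge G c v y"]) (simp_all add: connected_by_conic_slide_edge[OF slide]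
        good_tree_slide_edge[OF slide] star_defect_slide_edge_less[OF slide])
next
  case True
  with assms(3) obtain x where x: "x \<in># marks G" "x \<noteq> c"
    by (auto simp: star_defect_def)
  then have "{c, x} \<in> edges G"
    using True is_graph_marks_subset[OF good_tree_is_graph[OF g]] by (auto simp: non_neighbours_def)
  show ?thesis
    by (rule that[of "move_mark G x c"]) (simp_all add: good_tree_move_mark[OF g c]
        connected_by_conic_move_mark[OF g \<open>{c, x} \<in> edges G\<close> x(1)] size_move_mark[OF x(1)]
        star_defect_move_mark_less[OF x])
qed

lemma rtranclp_connected_by_conic_star:
  assumes "good_tree G" "c \<in> verts G"
  shows "connected_by_conic\<^sup>*\<^sup>* G (star (verts G) c (size (marks G)) (deg G))"
  using assms
proof (induction "star_defect G c" arbitrary: G rule: less_induct)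
  case less
  show ?case
  proof (cases "star_defect G c = 0")
    case True
    then show ?thesis by (simp add: star_eq_if_star_defect_eq_0[OF less.prems])
  next
    case False
    then obtain G' where "connected_by_conic G G'" "good_tree G'" "verts G' = verts G"
      "deg G' = deg G" "size (marks G') = size (marks G)" "star_defect G' c < star_defect G c"
      using star_defect_decreasing_step[OF less.prems] by blast
    moreover from this have
      "connected_by_conic\<^sup>*\<^sup>* G' (star (verts G) c (size (marks G)) (deg G))"
      using less.hyps[of G'] less.prems(2) by simp
    ultimately show ?thesis by (blast intro: converse_rtranclp_into_rtranclp)
  qed
qed

text \<open>The degrees of the renamed graph are given explicitly, so that its degree function can be
  made to agree with that of another graph everywhere, not only on the vertex set.\<close>

definition rename_vertices :: "('a \<Rightarrow> 'b) \<Rightarrow> ('b \<Rightarrow> nat) \<Rightarrow> 'a dgraph \<Rightarrow> 'b dgraph" where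
  "rename_vertices g d G =
     \<lparr>verts = g ` verts G, edges = image g ` edges G, deg = d, marks = image_mset g (marks G)\<rparr>"

lemma rtrancl_adj_rename_vertices:
  "(a, b) \<in> (adj G)\<^sup>* \<Longrightarrow> (g a, g b) \<in> (adj (rename_vertices g d G))\<^sup>*"
proof (induction rule: rtrancl_induct)
  case (step b b')
  have "g ` {b, b'} \<in> edges (rename_vertices g d G)"
    using imageI[of "{b, b'}" "edges G" "image g"] step(2)
    by (simp only: rename_vertices_def dgraph.simps adj_iff)
  then have "(g b, g b') \<in> adj (rename_vertices g d G)"
    by (simp only: adj_iff image_insert image_empty)
  with step.IH show ?case by (rule rtrancl_into_rtrancl)
qed simp

lemma is_graph_rename_vertices:
  assumes ig: "is_graph G" and inj: "inj_on g (verts G)"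
  shows "is_graph (rename_vertices g d G)"
proof -
  let ?R = "rename_vertices g d G"
  have edges_R: "\<forall>e\<in>edges ?R. \<exists>u v. u \<noteq> v \<and> e = {u, v} \<and> u \<in> verts ?R \<and> v \<in> verts ?R"
  proof
    fix e assume "e \<in> edges ?R"
    then obtain e' where e': "e' \<in> edges G" "e = g ` e'" by (auto simp: rename_vertices_def)
    obtain u v where uv: "u \<noteq> v" "e' = {u, v}" "u \<in> verts G" "v \<in> verts G"
      using is_graph_edgeE[OF ig e'(1)] by blast
    then have "g u \<noteq> g v" using inj by (meson inj_on_contraD)
    with uv e'(2) show "\<exists>u v. u \<noteq> v \<and> e = {u, v} \<and> u \<in> verts ?R \<and> v \<in> verts ?R"
      by (auto simp: rename_vertices_def)
  qed
  have connected_R: "\<forall>u\<in>verts ?R. \<forall>w\<in>verts ?R. (u, w) \<in> (adj ?R)\<^sup>*"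
  proof (intro ballI)
    fix u w assume "u \<in> verts ?R" "w \<in> verts ?R"
    then obtain a b where "a \<in> verts G" "b \<in> verts G" "u = g a" "w = g b"
      by (auto simp: rename_vertices_def)
    then show "(u, w) \<in> (adj ?R)\<^sup>*"
      by (simp add: rtrancl_adj_rename_vertices is_graph_connected[OF ig])
  qed
  have "inj_on (image g) (edges G)"
    using inj_on_subset[OF inj_on_image_Pow[OF inj] is_graph_edges_Pow[OF ig]] .
  then have "card (edges ?R) = card (edges G)"
    by (simp add: rename_vertices_def card_image)
  also have "\<dots> = card (verts ?R) - 1"
    using is_graph_card_edges[OF ig] inj by (simp add: rename_vertices_def card_image)
  finally have card_R: "card (edges ?R) = card (verts ?R) - 1" .
  have "finite (verts ?R)" "verts ?R \<noteq> {}" "set_mset (marks ?R) \<subseteq> verts ?R"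
    using is_graph_finite_verts[OF ig] is_graph_verts_nonempty[OF ig] is_graph_marks_subset[OF ig]
    by (auto simp: rename_vertices_def)
  with edges_R connected_R card_R show ?thesis
    unfolding is_graph_def by (intro conjI) assumption+
qed

lemma dgraph_iso_rename_vertices:
  assumes ig: "is_graph G" and inj: "inj_on g (verts G)" and d: "\<forall>v\<in>verts G. d (g v) = deg G v"
  shows "dgraph_iso G (rename_vertices g d G)"
proof -
  have bij: "bij_betw g (verts G) (g ` verts G)" using inj by (rule inj_on_imp_bij_betw)
  have edges: "{u, v} \<in> edges G \<longleftrightarrow> {g u, g v} \<in> image g ` edges G"
    if "u \<in> verts G" "v \<in> verts G" for u v
  proof -
    have "g ` {u, v} \<in> image g ` edges G \<longleftrightarrow> {u, v} \<in> edges G"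
      by (rule inj_on_image_mem_iff[OF inj_on_image_Pow[OF inj]])
        (use that is_graph_edges_Pow[OF ig] in auto)
    then show ?thesis by simp
  qed
  show ?thesis
    unfolding dgraph_iso_def rename_vertices_def dgraph.simps
    by (intro exI[of _ g] conjI ballI) (simp_all add: bij edges d)
qed

lemma dgraph_iso_sym:
  assumes iso: "dgraph_iso G K" and marks: "set_mset (marks G) \<subseteq> verts G"
  shows "dgraph_iso K G"
proof -
  obtain f where f: "bij_betw f (verts G) (verts K)"
    and edges: "\<forall>u\<in>verts G. \<forall>v\<in>verts G. {u, v} \<in> edges G \<longleftrightarrow> {f u, f v} \<in> edges K"
    and deg: "\<forall>v\<in>verts G. deg K (f v) = deg G v" and mk: "marks K = image_mset f (marks G)"
    using iso unfolding dgraph_iso_def by blast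
  let ?h = "inv_into (verts G) f"
  have h: "bij_betw ?h (verts K) (verts G)" using f by (rule bij_betw_inv_into)
  have fh: "f (?h v) = v" if "v \<in> verts K" for v
    using f that by (simp add: bij_betw_inv_into_right)
  have edges_K: "{u, v} \<in> edges K \<longleftrightarrow> {?h u, ?h v} \<in> edges G"
    if "u \<in> verts K" "v \<in> verts K" for u v
    using edges[rule_format, of "?h u" "?h v"] bij_betwE[OF h] that by (simp add: fh)
  have deg_K: "deg G (?h v) = deg K v" if "v \<in> verts K" for v
    using deg[rule_format, of "?h v"] bij_betwE[OF h] that by (simp add: fh)
  have "image_mset ?h (marks K) = image_mset (?h \<circ> f) (marks G)"
    by (simp add: mk multiset.map_comp)
  also have "\<dots> = image_mset id (marks G)"
    using marks bij_betw_imp_inj_on[OF f] by (intro image_mset_cong) (auto simp: inv_into_f_f)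
  finally have "marks G = image_mset ?h (marks K)" by simp
  with h edges_K deg_K show ?thesis
    unfolding dgraph_iso_def by (intro exI[of _ ?h] conjI ballI) simp_all
qed

lemma connected_by_conic_sym: "connected_by_conic G H \<Longrightarrow> connected_by_conic H G"
  unfolding connected_by_conic_def by blast

lemma good_tree_if_conic_deformation: "conic_deformation K G \<Longrightarrow> good_tree G"
  by (simp add: conic_deformation_def)

lemma good_tree_if_connected_by_conic:
  "connected_by_conic G H \<Longrightarrow> good_tree G \<and> good_tree H"
  unfolding connected_by_conic_def using good_tree_if_conic_deformation by blast

lemma rtranclp_connected_by_conic_imp_chain:
  assumes "connected_by_conic\<^sup>*\<^sup>* G H" "good_tree G"
  obtains T m where "T 0 = G" "T m = H" "\<forall>j\<le>m. good_tree (T j)"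
    "\<forall>j<m. connected_by_conic (T j) (T (Suc j))"
proof -
  obtain m where "(connected_by_conic ^^ m) G H"
    using rtranclp_imp_relpowp[OF assms(1)] ..
  then have "\<exists>T. T 0 = G \<and> T m = H \<and> (\<forall>j<m. connected_by_conic (T j) (T (Suc j)))"
    by (simp only: relpowp_fun_conv)
  then obtain T where T: "T 0 = G" "T m = H" "\<forall>j<m. connected_by_conic (T j) (T (Suc j))"
    by blast
  have good: "good_tree (T j)" if "j \<le> m" for j
  proof (cases j)
    case (Suc i)
    with that T(3) have "connected_by_conic (T i) (T j)" by simp
    then show ?thesis by (simp add: good_tree_if_connected_by_conic)
  qed (use T(1) assms(2) in simp)
  show ?thesis by (rule that[OF T(1,2) _ T(3)]) (simp add: good)
qed

theorem lemma5p4: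
  fixes G1 G2 :: "'a dgraph" and e k :: nat
  assumes "good_tree G1" and "good_tree G2"
    and "card (verts G1) = e" and "card (verts G2) = e"
    and "size (marks G1) = k" and "size (marks G2) = k"
  shows "\<exists>(T :: nat \<Rightarrow> 'a dgraph) m. T 0 = G1 \<and> dgraph_iso (T m) G2 \<and>
           (\<forall>j\<le>m. good_tree (T j)) \<and>
           (\<forall>j<m. connected_by_conic (T j) (T (Suc j)))"
proof -
  have ig: "is_graph G1" "is_graph G2" using assms(1,2) by (simp_all add: good_tree_is_graph)
  obtain c where c: "c \<in> verts G1" using is_graph_verts_nonempty[OF ig(1)] by blast
  obtain g where g: "bij_betw g (verts G2) (verts G1)"
    using finite_same_card_bij[OF is_graph_finite_verts[OF ig(2)] is_graph_finite_verts[OF ig(1)]]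
      assms(3,4) by metis
  have inj: "inj_on g (verts G2)" using g by (rule bij_betw_imp_inj_on)
  have deg: "\<forall>v\<in>verts G2. deg G1 (g v) = deg G2 v"
    using bij_betwE[OF g] by (simp add: good_tree_deg assms(1,2))
  define G2' where "G2' = rename_vertices g (deg G1) G2"
  have G2': "verts G2' = verts G1" "deg G2' = deg G1" "size (marks G2') = k"
    using bij_betw_imp_surj_on[OF g] assms(6) by (simp_all add: G2'_def rename_vertices_def)
  have "is_graph G2'" unfolding G2'_def using ig(2) inj by (rule is_graph_rename_vertices)
  then have "good_tree G2'"
    unfolding good_tree_def using good_tree_deg[OF assms(1)] by (simp add: G2')
  have iso: "dgraph_iso G2' G2"
    unfolding G2'_def
    using dgraph_iso_rename_vertices[OF ig(2) inj deg] is_graph_marks_subset[OF ig(2)]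
    by (rule dgraph_iso_sym)
  have "connected_by_conic\<^sup>*\<^sup>* G1 G2'"
  proof -
    let ?S = "star (verts G1) c k (deg G1)"
    have "connected_by_conic\<^sup>*\<^sup>* G1 ?S"
      using rtranclp_connected_by_conic_star[OF assms(1) c] assms(5) by simp
    have "connected_by_conic\<^sup>*\<^sup>* G2' ?S"
      using rtranclp_connected_by_conic_star[OF \<open>good_tree G2'\<close>, of c] c G2' by simp
    moreover have "symp connected_by_conic\<^sup>*\<^sup>*"
      by (rule symp_rtranclp, rule sympI, rule connected_by_conic_sym)
    ultimately have "connected_by_conic\<^sup>*\<^sup>* ?S G2'"
      by (blast dest: sympD)
    with \<open>connected_by_conic\<^sup>*\<^sup>* G1 ?S\<close> show ?thesis by (rule rtranclp_trans)
  qed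
  then obtain T m where "T 0 = G1" "T m = G2'" "\<forall>j\<le>m. good_tree (T j)"
    "\<forall>j<m. connected_by_conic (T j) (T (Suc j))"
    using assms(1) by (rule rtranclp_connected_by_conic_imp_chain)
  with iso show ?thesis by blast
qed

end
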